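(* Let $d\in\mathbb{N}_0$, $\boldsymbol{c}=(c_1,\ldots,c_d)\in(\mathbb{N}\setminus\{2\})^d$ with $c_1\ge3$ (if $d\ge1$), and $\boldsymbol{z}=(z_0,\ldots,z_d)\in\mathbb{C}^{d+1}$ with $|z_j|<1$. Then $\lim_{n\to\infty}G_n(\boldsymbol{c};\boldsymbol{z})=G(\boldsymbol{c};\boldsymbol{z})$, and the convergence is uniform on every closed region $|z_0|\le u_0<1,\ldots,|z_d|\le u_d<1$.
   Context: $t^{\star}_n(\boldsymbol{s})=\sum_{n\geq k_1\geq\cdots\geq k_r\geq1}\prod_{j}(2k_j-1)^{-s_j}$ and $t^{\star}(\boldsymbol{s})=\sum_{k_1\geq\cdots\geq k_r\geq1}\prod_{j}(2k_j-1)^{-s_j}$ (for $s_1>1$), both equal to $1$ on the empty index. $\{2\}^a$ is $2$ repeated $a$ times. $G_n(\boldsymbol{c};\boldsymbol{z})=\sum_{a_0,\ldots,a_d\geq0}t^{\star}_n(\{2\}^{a_0},c_1,\ldots,c_d,\{2\}^{a_d})z_0^{2a_0}\cdots z_d^{2a_d}$ and $G(\boldsymbol{c};\boldsymbol{z})$ is the same with $t^\star$ in place of $t^\star_n$. *)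

theory Defs
  imports "HOL-Analysis.Analysis"
begin

definition tstar_range :: "nat \<Rightarrow> nat list set" where
  "tstar_range r = {k. length k = r \<and> sorted_wrt (\<ge>) k \<and> (\<forall>x\<in>set k. 1 \<le> x)}"

definition tstar_term :: "nat list \<Rightarrow> nat list \<Rightarrow> real" where
  "tstar_term s k = (\<Prod>j<length s. 1 / (2 * real (k ! j) - 1) ^ (s ! j))"

definition tstar_n :: "nat \<Rightarrow> nat list \<Rightarrow> real" where
  "tstar_n n s = (\<Sum>k\<in>{k\<in>tstar_range (length s). \<forall>x\<in>set k. x \<le> n}. tstar_term s k)"

definition tstar :: "nat list \<Rightarrow> real" where
  "tstar s = infsum (tstar_term s) (tstar_range (length s))"

(* the index ({2}^{a_0}, c_1, {2}^{a_1}, ..., c_d, {2}^{a_d}), a = [a_0,...,a_d] *)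
definition Gidx :: "nat list \<Rightarrow> nat list \<Rightarrow> nat list" where
  "Gidx c a = replicate (a ! 0) 2 @
     concat (map (\<lambda>j. (c ! j) # replicate (a ! (Suc j)) 2) [0..<length c])"

definition Gmono :: "complex list \<Rightarrow> nat list \<Rightarrow> complex" where
  "Gmono z a = (\<Prod>j<length z. (z ! j) ^ (2 * (a ! j)))"

definition G_n :: "nat \<Rightarrow> nat list \<Rightarrow> complex list \<Rightarrow> complex" where
  "G_n n c z = infsum (\<lambda>a. of_real (tstar_n n (Gidx c a)) * Gmono z a)
                  {a. length a = Suc (length c)}"

definition G :: "nat list \<Rightarrow> complex list \<Rightarrow> complex" where
  "G c z = infsum (\<lambda>a. of_real (tstar (Gidx c a)) * Gmono z a)
                  {a. length a = Suc (length c)}"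

end

theory Submission
  imports Defs
begin

text \<open>
  Each coefficient t*_n({2}^a_0, c_1, ..., c_d, {2}^a_d) is nonnegative, increasing in n and bounded
  independently of n and a: a block {2}^a at most doubles t*_n, and t*_n(c) \<le> \<Sum>_K K^-2 < 2 because
  c_1 \<ge> 3. So the coefficients increase to those of G, and on the polydisc |z_j| \<le> u_j every term is
  dominated by a constant times u_0^(2a_0) \<cdots> u_d^(2a_d), whose sum over a is \<Prod>_j (1 - u_j^2)^-1.
  Dominated convergence for the series over a gives uniform convergence on the polydisc, and
  pointwise convergence is the case u_j = |z_j|.
\<close>

section \<open>The nested-sum recursion for t*_n\<close>

definition tstar_range_upto :: "nat \<Rightarrow> nat \<Rightarrow> nat list set" where
  "tstar_range_upto n r = {k\<in>tstar_range r. \<forall>x\<in>set k. x \<le> n}"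

lemma finite_tstar_range_upto: "finite (tstar_range_upto n r)"
proof (rule finite_subset)
  show "tstar_range_upto n r \<subseteq> {k. set k \<subseteq> {0..n} \<and> length k = r}"
    unfolding tstar_range_upto_def tstar_range_def by auto
qed (rule finite_lists_length_eq, simp)

lemma tstar_range_upto_Suc:
  "tstar_range_upto n (Suc r) = (\<lambda>(K, k). K # k) ` (SIGMA K:{1..n}. tstar_range_upto K r)"
proof (intro set_eqI iffI)
  fix l assume l: "l \<in> tstar_range_upto n (Suc r)"
  then obtain K k where "l = K # k"
    by (cases l) (auto simp: tstar_range_upto_def tstar_range_def)
  with l show "l \<in> (\<lambda>(K, k). K # k) ` (SIGMA K:{1..n}. tstar_range_upto K r)"
    by (auto simp: tstar_range_upto_def tstar_range_def intro!: image_eqI[of _ _ "(K, k)"])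
qed (auto simp: tstar_range_upto_def tstar_range_def, meson order_trans)

lemma tstar_range_upto_mono: "n \<le> m \<Longrightarrow> tstar_range_upto n r \<subseteq> tstar_range_upto m r"
  by (auto simp: tstar_range_upto_def)

lemma tstar_n_eq_sum: "tstar_n n s = sum (tstar_term s) (tstar_range_upto n (length s))"
  by (simp add: tstar_n_def tstar_range_upto_def)

lemma tstar_term_Cons: "tstar_term (x # s) (K # k) = (1 / (2 * real K - 1)) ^ x * tstar_term s k"
  unfolding tstar_term_def length_Cons prod.lessThan_Suc_shift by (simp add: power_one_over)

lemma tstar_term_nonneg:
  assumes "k \<in> tstar_range (length s)"
  shows "0 \<le> tstar_term s k"
  unfolding tstar_term_def
proof (rule prod_nonneg)
  fix j assume "j \<in> {..<length s}"
  with assms have "1 \<le> k ! j" by (auto simp: tstar_range_def)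
  then show "0 \<le> 1 / (2 * real (k ! j) - 1) ^ (s ! j)" by simp
qed

lemma tstar_n_Nil [simp]: "tstar_n n [] = 1"
proof -
  have "tstar_range_upto n 0 = {[]}" by (auto simp: tstar_range_upto_def tstar_range_def)
  then show ?thesis by (simp add: tstar_n_eq_sum tstar_term_def)
qed

lemma tstar_n_Cons:
  "tstar_n n (x # s) = (\<Sum>K=1..n. (1 / (2 * real K - 1)) ^ x * tstar_n K s)"
proof -
  have "tstar_n n (x # s)
      = (\<Sum>(K, k)\<in>(SIGMA K:{1..n}. tstar_range_upto K (length s)). tstar_term (x # s) (K # k))"
    unfolding tstar_n_eq_sum length_Cons tstar_range_upto_Suc
    by (subst sum.reindex) (auto simp: inj_on_def intro: sum.cong)
  also have "\<dots> = (\<Sum>K=1..n. \<Sum>k\<in>tstar_range_upto K (length s). tstar_term (x # s) (K # k))"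
    by (rule sum.Sigma[symmetric]) (auto simp: finite_tstar_range_upto)
  finally show ?thesis
    by (simp add: tstar_term_Cons tstar_n_eq_sum sum_distrib_left)
qed

lemma tstar_n_0_Cons [simp]: "tstar_n 0 (x # s) = 0"
  by (simp add: tstar_n_Cons)

lemma tstar_n_nonneg: "0 \<le> tstar_n n s"
  by (induction s arbitrary: n) (auto simp: tstar_n_Cons intro!: sum_nonneg)

lemma tstar_n_mono: "n \<le> m \<Longrightarrow> tstar_n n s \<le> tstar_n m s"
  by (cases s) (auto simp: tstar_n_Cons intro!: sum_mono2 mult_nonneg_nonneg tstar_n_nonneg)

lemma tstar_n_Suc_Cons:
  "tstar_n (Suc n) (x # s) = tstar_n n (x # s) + (1 / (2 * real (Suc n) - 1)) ^ x * tstar_n (Suc n) s"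
  by (simp add: tstar_n_Cons)

lemma tstar_n_Cons_le_scale:
  assumes "\<And>K. tstar_n K s \<le> M * tstar_n K s'"
  shows "tstar_n n (x # s) \<le> M * tstar_n n (x # s')"
proof -
  have "tstar_n n (x # s) \<le> (\<Sum>K=1..n. (1 / (2 * real K - 1)) ^ x * (M * tstar_n K s'))"
    unfolding tstar_n_Cons using assms by (auto intro!: sum_mono mult_left_mono)
  then show ?thesis by (simp add: tstar_n_Cons sum_distrib_left algebra_simps)
qed

section \<open>Bounds on the coefficients\<close>

text \<open>The factor 2 - 1/n in tstar_n_replicate_two_le, sharper than 2, is what lets its induction
  on n close; this inequality is the inductive step.\<close>

lemma two_minus_inverse_step_le:
  assumes "1 \<le> n"
  shows "(2 - 1 / real n) + (1 / (2 * real (Suc n) - 1))\<^sup>2 * (2 - 1 / real (Suc n))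
           \<le> 2 - 1 / real (Suc n)"
proof -
  have n: "real n \<ge> 1" using assms by simp
  have "2 * real (Suc n) - 1 = 2 * real n + 1" "2 - 1 / real (Suc n) = (2 * real n + 1) / (real n + 1)"
    by (simp_all add: field_simps)
  moreover have "2 * real n + 1 \<noteq> 0" "real n + 1 \<noteq> 0" using n by auto
  ultimately have "(1 / (2 * real (Suc n) - 1))\<^sup>2 * (2 - 1 / real (Suc n))
      = 1 / ((real n + 1) * (2 * real n + 1))"
    by (simp add: power2_eq_square divide_simps ac_simps)
  also have "\<dots> \<le> 1 / (real n * (real n + 1))"
    using n by (intro divide_left_mono mult_pos_pos) (auto simp: algebra_simps)
  also have "\<dots> = 1 / real n - 1 / real (Suc n)"
    using n by (simp add: field_simps)
  finally show ?thesis by simp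
qed

lemma tstar_n_replicate_two_le: "tstar_n n (replicate a 2 @ r) \<le> (2 - 1 / real n) * tstar_n n r"
proof (induction n arbitrary: a)
  case 0
  then show ?case by (cases a) (auto intro: tstar_n_nonneg)
next
  case (Suc n)
  note outer_IH = Suc.IH
  show ?case
  proof (induction a)
    case 0
    have "1 \<le> 2 - 1 / real (Suc n)" by (simp add: field_simps)
    then show ?case using tstar_n_nonneg[of "Suc n" r] by (simp add: mult_le_cancel_right1)
  next
    case (Suc a)
    let ?y = "(1 / (2 * real (Suc n) - 1))\<^sup>2"
    have split: "tstar_n (Suc n) (replicate (Suc a) 2 @ r)
        = tstar_n n (replicate (Suc a) 2 @ r) + ?y * tstar_n (Suc n) (replicate a 2 @ r)"
      using tstar_n_Suc_Cons[of n 2 "replicate a 2 @ r"] by simp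
    show ?case
    proof (cases "n = 0")
      case True
      then show ?thesis using split Suc.IH by simp
    next
      case False
      have "tstar_n n (replicate (Suc a) 2 @ r) \<le> (2 - 1 / real n) * tstar_n (Suc n) r"
      proof -
        have "0 \<le> 2 - 1 / real n" using False by (simp add: field_simps)
        then have "(2 - 1 / real n) * tstar_n n r \<le> (2 - 1 / real n) * tstar_n (Suc n) r"
          by (intro mult_left_mono tstar_n_mono) auto
        then show ?thesis using outer_IH[of "Suc a"] by linarith
      qed
      moreover have "?y * tstar_n (Suc n) (replicate a 2 @ r) \<le> ?y * ((2 - 1 / real (Suc n)) * tstar_n (Suc n) r)"
        using Suc.IH by (rule mult_left_mono) simp
      moreover have "((2 - 1 / real n) + ?y * (2 - 1 / real (Suc n))) * tstar_n (Suc n) r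
          = (2 - 1 / real n) * tstar_n (Suc n) r + ?y * ((2 - 1 / real (Suc n)) * tstar_n (Suc n) r)"
        by (simp only: distrib_right mult.assoc)
      ultimately have "tstar_n (Suc n) (replicate (Suc a) 2 @ r)
          \<le> ((2 - 1 / real n) + ?y * (2 - 1 / real (Suc n))) * tstar_n (Suc n) r"
        using split by linarith
      also have "\<dots> \<le> (2 - 1 / real (Suc n)) * tstar_n (Suc n) r"
        by (rule mult_right_mono[OF two_minus_inverse_step_le tstar_n_nonneg]) (use False in simp)
      finally show ?thesis .
    qed
  qed
qed

lemma tstar_n_replicate_two_le_double: "tstar_n n (replicate a 2 @ r) \<le> 2 * tstar_n n r"
proof -
  have "(2 - 1 / real n) * tstar_n n r \<le> 2 * tstar_n n r"
    by (intro mult_right_mono tstar_n_nonneg) simp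
  with tstar_n_replicate_two_le show ?thesis by (rule order_trans)
qed

lemma Gidx_Nil: "Gidx [] a = replicate (a ! 0) 2"
  by (simp add: Gidx_def)

lemma Gidx_Cons:
  assumes "a \<noteq> []"
  shows "Gidx (x # c) a = replicate (a ! 0) 2 @ x # Gidx c (tl a)"
proof -
  have "[0..<length (x # c)] = 0 # map Suc [0..<length c]"
    by (simp add: upt_conv_Cons map_Suc_upt del: upt_Suc)
  moreover have "tl a ! j = a ! Suc j" for j
    using assms by (cases a) auto
  ultimately show ?thesis by (simp add: Gidx_def comp_def)
qed

lemma tstar_n_Gidx_le:
  "length a = Suc (length c) \<Longrightarrow> tstar_n n (Gidx c a) \<le> 2 ^ Suc (length c) * tstar_n n c"
proof (induction c arbitrary: a n)
  case Nil
  then show ?case using tstar_n_replicate_two_le_double[of n _ "[]"] by (simp add: Gidx_Nil)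
next
  case (Cons x c)
  then have a: "a \<noteq> []" "length (tl a) = Suc (length c)" by auto
  have "tstar_n n (Gidx (x # c) a) \<le> 2 * tstar_n n (x # Gidx c (tl a))"
    unfolding Gidx_Cons[OF a(1)] by (rule tstar_n_replicate_two_le_double)
  also have "\<dots> \<le> 2 * (2 ^ Suc (length c) * tstar_n n (x # c))"
    using Cons.IH[OF a(2)] by (intro mult_left_mono tstar_n_Cons_le_scale) auto
  finally show ?case by simp
qed

lemma tstar_n_le_self:
  assumes "\<forall>x\<in>set s. 1 \<le> x" "1 \<le> n"
  shows "tstar_n n s \<le> real n"
  using assms
proof (induction s arbitrary: n)
  case (Cons x s)
  have "tstar_n n (x # s) \<le> (\<Sum>K=1..n. 1)"
    unfolding tstar_n_Cons
  proof (rule sum_mono)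
    fix K assume K: "K \<in> {1..n}"
    let ?y = "1 / (2 * real K - 1)"
    have y: "0 \<le> ?y" "?y \<le> 1" using K by auto
    have "?y ^ x \<le> ?y" using y Cons.prems(1) power_decreasing[of 1 x ?y] by simp
    moreover have "tstar_n K s \<le> real K" using Cons K by simp
    ultimately have "?y ^ x * tstar_n K s \<le> ?y * real K"
      using y by (intro mult_mono tstar_n_nonneg) auto
    also have "\<dots> \<le> 1" using K by (simp add: divide_simps)
    finally show "?y ^ x * tstar_n K s \<le> 1" .
  qed
  then show ?case by simp
qed simp

lemma sum_inverse_squares_le: "(\<Sum>K=1..n. 1 / (real K)\<^sup>2) \<le> 2 - 1 / real n"
proof (induction n)
  case (Suc n)
  show ?case
  proof (cases "n = 0")
    case False
    then have n: "real n \<ge> 1" by simp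
    have "1 / (real (Suc n))\<^sup>2 \<le> 1 / (real n * (real n + 1))"
      using n by (intro divide_left_mono mult_pos_pos)
        (auto simp: power2_eq_square algebra_simps intro: add_pos_nonneg)
    also have "\<dots> = 1 / real n - 1 / real (Suc n)"
      using n by (simp add: field_simps)
    finally show ?thesis using Suc.IH by (simp add: sum.cl_ivl_Suc)
  qed simp
qed simp

lemma tstar_n_le_two:
  assumes "\<forall>x\<in>set c. 1 \<le> x" and "c \<noteq> [] \<longrightarrow> 3 \<le> c ! 0"
  shows "tstar_n n c \<le> 2"
proof (cases c)
  case (Cons x cs)
  then have x: "3 \<le> x" and cs: "\<forall>x\<in>set cs. 1 \<le> x" using assms by auto
  have "tstar_n n c \<le> (\<Sum>K=1..n. 1 / (real K)\<^sup>2)"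
    unfolding Cons tstar_n_Cons
  proof (rule sum_mono)
    fix K assume K: "K \<in> {1..n}"
    let ?y = "1 / (2 * real K - 1)"
    have y: "0 \<le> ?y" "?y \<le> 1" using K by auto
    have "?y ^ x \<le> ?y ^ 3" using power_decreasing[OF x y] .
    moreover have "tstar_n K cs \<le> real K" using tstar_n_le_self cs K by simp
    ultimately have "?y ^ x * tstar_n K cs \<le> ?y ^ 3 * real K"
      using y by (intro mult_mono tstar_n_nonneg) auto
    also have "\<dots> \<le> 1 / (real K)\<^sup>2" \<comment> \<open>this is where c_1 \<ge> 3 is needed\<close>
    proof -
      have "real K ^ 3 \<le> (2 * real K - 1) ^ 3" using K by (intro power_mono) auto
      then show ?thesis using K by (simp add: divide_simps power2_eq_square power3_eq_cube)
    qed
    finally show "?y ^ x * tstar_n K cs \<le> 1 / (real K)\<^sup>2" .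
  qed
  also have "\<dots> \<le> 2 - 1 / real n" by (rule sum_inverse_squares_le)
  also have "\<dots> \<le> 2" by simp
  finally show ?thesis .
qed simp

section \<open>Convergence of the coefficients\<close>

lemma tendsto_sum_exhaustion_infsum:
  fixes f :: "'a \<Rightarrow> real"
  assumes nonneg: "\<And>x. x \<in> A \<Longrightarrow> 0 \<le> f x"
    and finite: "\<And>n. finite (S n)" and subset: "\<And>n. S n \<subseteq> A" and mono: "mono S"
    and exhaust: "\<And>X. finite X \<Longrightarrow> X \<subseteq> A \<Longrightarrow> \<exists>n. X \<subseteq> S n"
    and bounded: "\<And>n. sum f (S n) \<le> B"
  shows "(\<lambda>n. sum f (S n)) \<longlonglongrightarrow> infsum f A" and "sum f (S n) \<le> infsum f A"
proof -
  have sum_le: "sum f X \<le> sum f Y" if "X \<subseteq> Y" "Y \<subseteq> A" "finite Y" for X Y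
    using that nonneg by (intro sum_mono2) auto
  have "f summable_on A"
  proof (rule nonneg_bdd_above_summable_on)
    show "bdd_above (sum f ` {F. F \<subseteq> A \<and> finite F})"
    proof (rule bdd_aboveI2)
      fix F assume "F \<in> {F. F \<subseteq> A \<and> finite F}"
      then obtain n where "F \<subseteq> S n" using exhaust by blast
      then show "sum f F \<le> B"
        using sum_le[OF _ subset finite] bounded order_trans by blast
    qed
  qed (rule nonneg)
  moreover have "filterlim S (finite_subsets_at_top A) sequentially"
    unfolding filterlim_finite_subsets_at_top
  proof (intro allI impI)
    fix X assume "finite X \<and> X \<subseteq> A"
    then obtain N where "X \<subseteq> S N" using exhaust by blast
    then show "eventually (\<lambda>n. finite (S n) \<and> X \<subseteq> S n \<and> S n \<subseteq> A) sequentially"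
      using finite subset mono unfolding eventually_sequentially mono_def by blast
  qed
  ultimately show lim: "(\<lambda>n. sum f (S n)) \<longlonglongrightarrow> infsum f A"
    by (rule filterlim_compose[OF infsum_tendsto])
  have "incseq (\<lambda>n. sum f (S n))"
    using mono by (auto simp: mono_def intro!: sum_le subset finite)
  then show "sum f (S n) \<le> infsum f A" using lim by (rule incseq_le)
qed

lemma tstar_n_tendsto_tstar:
  assumes "\<And>n. tstar_n n s \<le> B"
  shows "(\<lambda>n. tstar_n n s) \<longlonglongrightarrow> tstar s" and "tstar_n n s \<le> tstar s"
proof -
  let ?S = "\<lambda>n. tstar_range_upto n (length s)"
  have exhaust: "\<exists>n. X \<subseteq> ?S n" if "finite X" "X \<subseteq> tstar_range (length s)" for X
  proof
    show "X \<subseteq> ?S (Max (insert 0 (\<Union>k\<in>X. set k)))"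
      using that by (auto simp: tstar_range_upto_def intro!: Max_ge)
  qed
  note lim = tendsto_sum_exhaustion_infsum[of "tstar_range (length s)" "tstar_term s" ?S B,
      OF tstar_term_nonneg finite_tstar_range_upto _ _ exhaust]
  have "?S n \<subseteq> tstar_range (length s)" for n by (auto simp: tstar_range_upto_def)
  moreover have "mono ?S" by (auto simp: mono_def tstar_range_upto_mono)
  ultimately show "(\<lambda>n. tstar_n n s) \<longlonglongrightarrow> tstar s" and "tstar_n n s \<le> tstar s"
    using lim assms unfolding tstar_n_eq_sum tstar_def by blast+
qed

lemma tstar_Gidx_coefficient_bounds:
  assumes "\<forall>x\<in>set c. 1 \<le> x" and "c \<noteq> [] \<longrightarrow> 3 \<le> c ! 0" and "length a = Suc (length c)"
  shows "(\<lambda>n. tstar_n n (Gidx c a)) \<longlonglongrightarrow> tstar (Gidx c a)"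
    and "tstar_n n (Gidx c a) \<le> tstar (Gidx c a)"
    and "tstar (Gidx c a) \<le> 2 ^ Suc (Suc (length c))"
proof -
  have bound: "tstar_n n (Gidx c a) \<le> 2 ^ Suc (Suc (length c))" for n
  proof -
    have "tstar_n n (Gidx c a) \<le> 2 ^ Suc (length c) * tstar_n n c"
      using assms(3) by (rule tstar_n_Gidx_le)
    also have "\<dots> \<le> 2 ^ Suc (length c) * 2"
      using tstar_n_le_two[OF assms(1,2)] by (intro mult_left_mono) auto
    finally show ?thesis by simp
  qed
  show lim: "(\<lambda>n. tstar_n n (Gidx c a)) \<longlonglongrightarrow> tstar (Gidx c a)"
    and "tstar_n n (Gidx c a) \<le> tstar (Gidx c a)"
    using tstar_n_tendsto_tstar[OF bound] by blast+
  show "tstar (Gidx c a) \<le> 2 ^ Suc (Suc (length c))"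
    using lim bound by (intro LIMSEQ_le_const2) auto
qed

section \<open>Dominated convergence of the series\<close>

lemma infsum_tendsto_0_dominated:
  fixes h :: "nat \<Rightarrow> 'a \<Rightarrow> real"
  assumes g: "g summable_on A"
    and bounds: "\<And>n a. a \<in> A \<Longrightarrow> 0 \<le> h n a \<and> h n a \<le> g a"
    and pointwise: "\<And>a. a \<in> A \<Longrightarrow> (\<lambda>n. h n a) \<longlonglongrightarrow> 0"
  shows "(\<lambda>n. infsum (h n) A) \<longlonglongrightarrow> 0"
proof (rule tendstoI)
  fix e :: real assume e: "0 < e"
  obtain F where F: "finite F" "F \<subseteq> A" "dist (sum g F) (infsum g A) \<le> e / 2"
    using infsum_finite_approximation[OF g, of "e / 2"] e by auto
  have "infsum g (A - F) = infsum g A - sum g F"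
    using F infsum_Diff[OF g _ F(2)] by simp
  then have tail: "infsum g (A - F) \<le> e / 2"
    using F(3) unfolding dist_real_def by arith
  have "(\<lambda>n. sum (h n) F) \<longlonglongrightarrow> 0"
    using F by (intro tendsto_null_sum pointwise) auto
  then have "eventually (\<lambda>n. sum (h n) F < e / 2) sequentially"
    by (rule order_tendstoD(2)) (use e in simp)
  then show "eventually (\<lambda>n. dist (infsum (h n) A) 0 < e) sequentially"
  proof eventually_elim
    case (elim n)
    have hs: "h n summable_on A"
      by (rule summable_on_comparison_test[OF g]) (use bounds in blast)+
    have "infsum (h n) A = infsum (h n) (A - F) + sum (h n) F"
      using infsum_Diff[OF hs _ F(2)] F(1) by simp
    also have "infsum (h n) (A - F) \<le> infsum g (A - F)"
      using bounds by (intro infsum_mono summable_on_subset[OF hs] summable_on_subset[OF g]) auto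
    finally have "infsum (h n) A < e"
      using tail elim by linarith
    moreover have "0 \<le> infsum (h n) A" using bounds by (intro infsum_nonneg) auto
    ultimately show ?case by (simp add: dist_real_def)
  qed
qed

lemma uniform_limit_infsum_dominated:
  fixes f :: "nat \<Rightarrow> 'b \<Rightarrow> 'a \<Rightarrow> 'c::banach" and g :: "'b \<Rightarrow> 'a \<Rightarrow> 'c"
  assumes H: "H summable_on A"
    and g_bound: "\<And>w a. w \<in> W \<Longrightarrow> a \<in> A \<Longrightarrow> norm (g w a) \<le> H a"
    and error: "\<And>n w a. w \<in> W \<Longrightarrow> a \<in> A \<Longrightarrow> norm (f n w a - g w a) \<le> h n a"
    and h_bounds: "\<And>n a. a \<in> A \<Longrightarrow> 0 \<le> h n a \<and> h n a \<le> H a"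
    and h_pointwise: "\<And>a. a \<in> A \<Longrightarrow> (\<lambda>n. h n a) \<longlonglongrightarrow> 0"
  shows "uniform_limit W (\<lambda>n w. infsum (f n w) A) (\<lambda>w. infsum (g w) A) sequentially"
proof (rule uniform_limitI)
  fix e :: real assume "0 < e"
  have h_summable: "h n summable_on A" for n
    by (rule summable_on_comparison_test[OF H]) (use h_bounds in blast)+
  have dist_le: "dist (infsum (f n w) A) (infsum (g w) A) \<le> infsum (h n) A" if "w \<in> W" for n w
  proof -
    have f_norm: "norm (f n w a) \<le> H a + h n a" if "a \<in> A" for a
      using norm_triangle_ineq2[of "f n w a" "g w a"] g_bound[OF \<open>w \<in> W\<close> that]
        error[OF \<open>w \<in> W\<close> that, of n]
      by linarith
    have f_summable: "f n w summable_on A"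
      by (rule abs_summable_summable,
          rule Infinite_Sum.abs_summable_on_comparison_test'[OF summable_on_add[OF H h_summable] f_norm])
    have g_summable: "g w summable_on A"
      by (rule abs_summable_summable, rule Infinite_Sum.abs_summable_on_comparison_test'[OF H])
        (use g_bound that in auto)
    have diff_abs: "(\<lambda>a. f n w a - g w a) abs_summable_on A"
      by (rule Infinite_Sum.abs_summable_on_comparison_test'[OF h_summable]) (use error that in auto)
    have "infsum (\<lambda>a. f n w a - g w a) A = infsum (f n w) A - infsum (g w) A"
      using infsum_add[OF f_summable, of "\<lambda>a. - g w a"] g_summable
      by (simp add: summable_on_uminus infsum_uminus)
    then have "dist (infsum (f n w) A) (infsum (g w) A) = norm (infsum (\<lambda>a. f n w a - g w a) A)"
      by (simp add: dist_norm)
    also have "\<dots> \<le> infsum (\<lambda>a. norm (f n w a - g w a)) A"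
      by (rule norm_infsum_bound[OF diff_abs])
    also have "\<dots> \<le> infsum (h n) A"
      by (rule infsum_mono[OF diff_abs h_summable]) (use error that in auto)
    finally show ?thesis .
  qed
  have "eventually (\<lambda>n. infsum (h n) A < e) sequentially"
    using infsum_tendsto_0_dominated[OF H h_bounds h_pointwise] \<open>0 < e\<close>
    by (auto dest: order_tendstoD(2))
  then show "eventually (\<lambda>n. \<forall>w\<in>W. dist (infsum (f n w) A) (infsum (g w) A) < e) sequentially"
    by eventually_elim (use dist_le in \<open>blast intro: le_less_trans\<close>)
qed

definition Gmono_majorant :: "real list \<Rightarrow> nat list \<Rightarrow> real" where
  "Gmono_majorant u a = (\<Prod>j<length u. (u ! j) ^ (2 * (a ! j)))"

lemma Gmono_majorant_Cons: "Gmono_majorant (v # u) (b # a) = v ^ (2 * b) * Gmono_majorant u a"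
  unfolding Gmono_majorant_def length_Cons prod.lessThan_Suc_shift by simp

lemma Gmono_majorant_nonneg: "\<forall>j<length u. 0 \<le> u ! j \<Longrightarrow> 0 \<le> Gmono_majorant u a"
  unfolding Gmono_majorant_def by (auto intro!: prod_nonneg)

lemma norm_Gmono_le_majorant:
  assumes "length w = length u" and "\<forall>j<length w. norm (w ! j) \<le> u ! j"
  shows "norm (Gmono w a) \<le> Gmono_majorant u a"
proof -
  have "norm (Gmono w a) = (\<Prod>j<length w. norm ((w ! j) ^ (2 * (a ! j))))"
    unfolding Gmono_def by (simp add: prod_norm)
  also have "\<dots> = (\<Prod>j<length w. norm (w ! j) ^ (2 * (a ! j)))"
    by (simp add: norm_power)
  also have "\<dots> \<le> (\<Prod>j<length w. (u ! j) ^ (2 * (a ! j)))"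
    using assms(2) by (intro prod_mono) (auto intro: power_mono)
  finally show ?thesis unfolding Gmono_majorant_def using assms(1) by simp
qed

lemma sum_Gmono_majorant_le:
  assumes "\<forall>j<length u. 0 \<le> u ! j \<and> u ! j < 1"
    and "finite F" and "F \<subseteq> {a. length a = length u}"
  shows "sum (Gmono_majorant u) F \<le> (\<Prod>j<length u. 1 / (1 - (u ! j)\<^sup>2))"
  using assms
proof (induction u arbitrary: F)
  case Nil
  then have "F = {} \<or> F = {[]}" by auto
  then show ?case by (auto simp: Gmono_majorant_def)
next
  case (Cons v u)
  have v: "0 \<le> v" "v\<^sup>2 < 1" using Cons.prems(1) by (auto simp: abs_square_less_1)
  have u: "\<forall>j<length u. 0 \<le> u ! j \<and> u ! j < 1" using Cons.prems(1) by auto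
  let ?B = "hd ` F" and ?T = "tl ` F"
  have "F \<subseteq> (\<lambda>(b, a). b # a) ` (?B \<times> ?T)"
  proof
    fix a assume "a \<in> F"
    moreover from this have "a = hd a # tl a" using Cons.prems(3) by (cases a) auto
    ultimately show "a \<in> (\<lambda>(b, a). b # a) ` (?B \<times> ?T)" by force
  qed
  then have "sum (Gmono_majorant (v # u)) F
      \<le> sum (Gmono_majorant (v # u)) ((\<lambda>(b, a). b # a) ` (?B \<times> ?T))"
    using Cons.prems by (intro sum_mono2 Gmono_majorant_nonneg) auto
  also have "\<dots> = (\<Sum>(b, a)\<in>?B \<times> ?T. v ^ (2 * b) * Gmono_majorant u a)"
    by (subst sum.reindex) (auto simp: inj_on_def Gmono_majorant_Cons intro: sum.cong)
  also have "\<dots> = (\<Sum>b\<in>?B. (v\<^sup>2) ^ b) * sum (Gmono_majorant u) ?T"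
    by (simp add: sum_product sum.cartesian_product power_mult)
  also have "\<dots> \<le> (1 / (1 - v\<^sup>2)) * (\<Prod>j<length u. 1 / (1 - (u ! j)\<^sup>2))"
  proof (rule mult_mono)
    have "(\<Sum>b\<in>?B. (v\<^sup>2) ^ b) \<le> (\<Sum>b. (v\<^sup>2) ^ b)"
      using v Cons.prems(2) by (intro sum_le_suminf summable_geometric) auto
    then show "(\<Sum>b\<in>?B. (v\<^sup>2) ^ b) \<le> 1 / (1 - v\<^sup>2)"
      using v by (simp add: suminf_geometric)
    show "sum (Gmono_majorant u) ?T \<le> (\<Prod>j<length u. 1 / (1 - (u ! j)\<^sup>2))"
      using Cons.prems by (intro Cons.IH u) auto
  qed (use v u in \<open>auto intro!: sum_nonneg Gmono_majorant_nonneg\<close>)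
  also have "\<dots> = (\<Prod>j<length (v # u). 1 / (1 - ((v # u) ! j)\<^sup>2))"
    unfolding length_Cons prod.lessThan_Suc_shift by simp
  finally show ?case .
qed

lemma Gmono_majorant_summable_on:
  assumes "\<forall>j<length u. 0 \<le> u ! j \<and> u ! j < 1"
  shows "Gmono_majorant u summable_on {a. length a = length u}"
proof (rule nonneg_bdd_above_summable_on)
  show "bdd_above (sum (Gmono_majorant u) ` {F. F \<subseteq> {a. length a = length u} \<and> finite F})"
    using sum_Gmono_majorant_le[OF assms] by (intro bdd_aboveI2) auto
qed (use assms Gmono_majorant_nonneg in auto)

lemma uniform_limit_G_n:
  assumes c: "\<forall>x\<in>set c. 1 \<le> x" "c \<noteq> [] \<longrightarrow> 3 \<le> c ! 0"
    and u: "length u = Suc (length c)" "\<forall>j<length u. u ! j < 1"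
  shows "uniform_limit {w. length w = Suc (length c) \<and> (\<forall>j<length w. norm (w ! j) \<le> u ! j)}
           (\<lambda>n w. G_n n c w) (\<lambda>w. G c w) sequentially"
    (is "uniform_limit ?W _ _ _")
proof (cases "?W = {}")
  case True
  then show ?thesis by (simp only:) (rule uniform_limitI, simp)
next
  case False
  then obtain w0 where "w0 \<in> ?W" by blast
  then have u_range: "\<forall>j<length u. 0 \<le> u ! j \<and> u ! j < 1"
    using u by (auto intro: order_trans[OF norm_ge_zero])
  let ?A = "{a :: nat list. length a = Suc (length c)}"
  let ?M = "2 ^ Suc (Suc (length c)) :: real"
  let ?t = "\<lambda>a. tstar (Gidx c a)" and ?t_n = "\<lambda>n a. tstar_n n (Gidx c a)"
  let ?m = "Gmono_majorant u"
  have lim: "(\<lambda>n. ?t_n n a) \<longlonglongrightarrow> ?t a" and below: "?t_n n a \<le> ?t a" and above: "?t a \<le> ?M"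
    if "a \<in> ?A" for n a
    using tstar_Gidx_coefficient_bounds[OF c] that by auto
  have t_nonneg: "0 \<le> ?t a" if "a \<in> ?A" for a
    using below[OF that, of 0] tstar_n_nonneg[of 0 "Gidx c a"] by linarith
  have m: "0 \<le> ?m a" for a using u_range by (intro Gmono_majorant_nonneg) auto
  have norm_Gmono: "norm (Gmono w a) \<le> ?m a" if "w \<in> ?W" for w a
    using that u by (intro norm_Gmono_le_majorant) auto
  show ?thesis
    unfolding G_n_def G_def
  proof (rule uniform_limit_infsum_dominated[where H = "\<lambda>a. ?M * ?m a"
        and h = "\<lambda>n a. (?t a - ?t_n n a) * ?m a"])
    show "(\<lambda>a. ?M * ?m a) summable_on ?A"
      using Gmono_majorant_summable_on[OF u_range] u(1) by (intro summable_on_cmult_right) simp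
    show "norm (of_real (?t a) * Gmono w a) \<le> ?M * ?m a" if "w \<in> ?W" "a \<in> ?A" for w a
      using above[OF that(2)] t_nonneg[OF that(2)] norm_Gmono[OF that(1)]
      by (simp add: norm_mult) (intro mult_mono, auto)
    show "norm (of_real (?t_n n a) * Gmono w a - of_real (?t a) * Gmono w a) \<le> (?t a - ?t_n n a) * ?m a"
      if "w \<in> ?W" "a \<in> ?A" for n w a
    proof -
      have "norm (of_real (?t_n n a) * Gmono w a - of_real (?t a) * Gmono w a)
          = (?t a - ?t_n n a) * norm (Gmono w a)"
        using below[OF that(2)] by (simp add: norm_mult flip: left_diff_distrib of_real_diff)
      also have "\<dots> \<le> (?t a - ?t_n n a) * ?m a"
        using below[OF that(2)] norm_Gmono[OF that(1)] by (intro mult_left_mono) auto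
      finally show ?thesis .
    qed
    show "0 \<le> (?t a - ?t_n n a) * ?m a \<and> (?t a - ?t_n n a) * ?m a \<le> ?M * ?m a" if "a \<in> ?A" for n a
    proof
      show "0 \<le> (?t a - ?t_n n a) * ?m a" using below[OF that] m by simp
      have "?t a - ?t_n n a \<le> ?M" using above[OF that] tstar_n_nonneg[of n "Gidx c a"] by linarith
      then show "(?t a - ?t_n n a) * ?m a \<le> ?M * ?m a" using m by (rule mult_right_mono)
    qed
    show "(\<lambda>n. (?t a - ?t_n n a) * ?m a) \<longlonglongrightarrow> 0" if "a \<in> ?A" for a
    proof -
      have "(\<lambda>n. (?t a - ?t_n n a) * ?m a) \<longlonglongrightarrow> (?t a - ?t a) * ?m a"
        by (intro tendsto_intros lim[OF that])
      then show ?thesis by simp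
    qed
  qed
qed

theorem lemma3p5:
  fixes c :: "nat list" and z :: "complex list"
  assumes c_pos: "\<forall>x\<in>set c. 1 \<le> x \<and> x \<noteq> 2"
    and c_first: "c \<noteq> [] \<longrightarrow> 3 \<le> c ! 0"
    and z_len: "length z = Suc (length c)"
    and z_bd: "\<forall>j<length z. norm (z ! j) < 1"
  shows "(\<lambda>n. G_n n c z) \<longlonglongrightarrow> G c z \<and>
         (\<forall>u :: real list. length u = Suc (length c) \<and> (\<forall>j<length u. u ! j < 1) \<longrightarrow>
           uniform_limit {w. length w = Suc (length c) \<and> (\<forall>j<length w. norm (w ! j) \<le> u ! j)}
             (\<lambda>n w. G_n n c w) (\<lambda>w. G c w) sequentially)"
proof -
  have c: "\<forall>x\<in>set c. 1 \<le> x" using c_pos by blast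
  let ?W = "{w. length w = Suc (length c) \<and> (\<forall>j<length w. norm (w ! j) \<le> map norm z ! j)}"
  have "uniform_limit ?W (\<lambda>n w. G_n n c w) (\<lambda>w. G c w) sequentially"
    using z_len z_bd by (intro uniform_limit_G_n[OF c c_first]) auto
  moreover have "z \<in> ?W" using z_len by auto
  ultimately have "(\<lambda>n. G_n n c z) \<longlonglongrightarrow> G c z"
    by (rule tendsto_uniform_limitI)
  then show ?thesis using uniform_limit_G_n[OF c c_first] by blast
qed

end
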